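(* For every finite rooted ordered tree $\mathbf{t}$ and every $k\in\mathbb{N}^*$, \[ 0\le D_k(\mathbf{t})-\mathcal{D}_k(\mathbf{t})\le|\mathbf{t}|^k. \]
   Context: For a finite rooted ordered tree $\mathbf{t}$ with root $\emptyset$, $|\mathbf{t}|$ is its number of nodes and $d$ the graph distance. For $\mathbf{u}=(u_1,\dots,u_k)\in\mathbf{t}^k$, $\mathfrak{m}(\mathbf{u})$ is the most recent common ancestor of $u_1,\dots,u_k$, and $D_k(\mathbf{t})=\sum_{\mathbf{u}\in\mathbf{t}^k}d(\emptyset,\mathfrak{m}(\mathbf{u}))$. The contour process $C^{\mathbf{t}}$ is the continuous function on $[0,2|\mathbf{t}|]$ giving the distance to the root of a particle that starts at the root and traverses each edge (of length 1) at unit speed, visiting the nodes in depth-first lexicographic order and returning to the root at time $2|\mathbf{t}|-2$; $C^{\mathbf{t}}=0$ on $[2|\mathbf{t}|-2,2|\mathbf{t}|]$. For a function $h$ and reals $s,t$ in its domain, $m_h(s,t)=\inf_{u\in[s\wedge t,s\vee t]}h(u)$. For $x=(x_1,\dots,x_k)$, $x_{(1)}\le\dots\le x_{(k)}$ is its order statistic, and $\mathcal{D}_k(\mathbf{t})=\int_{[0,|\mathbf{t}|]^k}m_{C^{\mathbf{t}}}(2x_{(1)},2x_{(k)})\,dx$ (for $k=1$ this is $\int_0^{|\mathbf{t}|}C^{\mathbf{t}}(2x)dx$). *)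

theory Defs
  imports "HOL-Analysis.Analysis"
begin

datatype otree = Node "otree list"

text \<open>Ulam--Harris node set: the root is the empty word, the i-th child of u is u@[i].
  The distance of a node to the root is the length of its word.\<close>
function nodes :: "otree \<Rightarrow> nat list set" where
  "nodes (Node ts) = insert [] (\<Union>i<length ts. (Cons i) ` nodes (ts ! i))"
  by pat_completeness auto
termination
  by (relation "Wellfounded.measure size") (auto simp: less_Suc_eq_le intro!: size_list_estimation' nth_mem)

definition tsize :: "otree \<Rightarrow> nat" where
  "tsize t = card (nodes t)"

text \<open>Longest common prefix; the most recent common ancestor of u_0,...,u_{k-1}.\<close>
fun lcp :: "nat list \<Rightarrow> nat list \<Rightarrow> nat list" where
  "lcp (x # xs) (y # ys) = (if x = y then x # lcp xs ys else [])"
| "lcp _ _ = []"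

definition mrca :: "(nat \<Rightarrow> nat list) \<Rightarrow> nat \<Rightarrow> nat list" where
  "mrca u k = foldl (\<lambda>acc i. lcp acc (u i)) (u 0) [1..<k]"

definition Dk :: "otree \<Rightarrow> nat \<Rightarrow> nat" where
  "Dk t k = (\<Sum>u\<in>PiE {..<k} (\<lambda>_. nodes t). length (mrca u k))"

text \<open>Heights visited by the contour walk at integer times 0,1,...,2|t|-2.\<close>
fun contour_seq :: "otree \<Rightarrow> nat list" where
  "contour_seq (Node ts) = 0 # concat (map (\<lambda>c. map Suc (contour_seq c) @ [0]) ts)"

text \<open>The contour process: linear interpolation of contour_seq, and 0 on [2|t|-2, 2|t|].\<close>
definition contour :: "otree \<Rightarrow> real \<Rightarrow> real" where
  "contour t s = (let c = contour_seq t; n = nat \<lfloor>s\<rfloor> in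
     if 0 \<le> s \<and> n + 1 < length c
     then real (c ! n) + (s - real n) * (real (c ! (n+1)) - real (c ! n))
     else 0)"

definition minf :: "(real \<Rightarrow> real) \<Rightarrow> real \<Rightarrow> real \<Rightarrow> real" where
  "minf h s t = Inf (h ` {min s t..max s t})"

definition DDk :: "otree \<Rightarrow> nat \<Rightarrow> real" where
  "DDk t k = integral\<^sup>L (PiM {..<k} (\<lambda>_. restrict_space lborel {0..real (tsize t)}))
     (\<lambda>x. minf (contour t) (2 * Min (x ` {..<k})) (2 * Max (x ` {..<k})))"

end

theory Submission
  imports Defs
begin

text \<open>
  The contour sequence of \<open>t\<close> traverses the subtree of every non-root node \<open>u\<close> during an
  excursion \<open>(p, q)\<close> of length \<open>q - p = 2 |t_u|\<close>, and \<open>D_k(t) = \<Sum>\<^sub>u |t_u|^k\<close>, since \<open>u\<close> is a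
  common ancestor of exactly \<open>|t_u|^k\<close> tuples. For \<open>x \<in> [0, |t|]^k\<close> the minimum of the contour on
  \<open>[2 x_(1), 2 x_(k)]\<close> lies between the number of excursions with \<open>p + 1 \<le> 2 x_(1)\<close> and
  \<open>2 x_(k) \<le> q - 1\<close> and the number of excursions with \<open>p \<le> 2 x_(1)\<close> and \<open>2 x_(k) \<le> q\<close>:
  the contour is a unit-slope walk, so the excursions covering the interval start at
  distinct heights, one for each level below the minimum. Integrating these counts of
  cubes gives \<open>\<Sum>\<^sub>u (|t_u| - 1)^k \<le> \<D>_k(t) \<le> \<Sum>\<^sub>u |t_u|^k = D_k(t)\<close>, and
  \<open>\<Sum>\<^sub>u (|t_u|^k - (|t_u| - 1)^k) \<le> (|t| - 1)^k\<close> by induction on the tree, using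
  \<open>x^k + y^k \<le> (x + y)^k\<close>.
\<close>

section \<open>Trees and their contour sequences\<close>

lemma finite_nodes: "finite (nodes t)"
  by (induction t rule: nodes.induct) auto

lemma Cons_in_nodes_Node: "i # w \<in> nodes (Node ts) \<longleftrightarrow> i < length ts \<and> w \<in> nodes (ts ! i)"
  by auto

lemma tsize_Node: "tsize (Node ts) = 1 + (\<Sum>i<length ts. tsize (ts ! i))"
proof -
  have "card (nodes (Node ts)) = 1 + card (\<Union>i<length ts. (Cons i) ` nodes (ts ! i))"
    by (subst nodes.simps, subst card_insert_disjoint) (auto simp: finite_nodes)
  also have "card (\<Union>i<length ts. (Cons i) ` nodes (ts ! i)) = (\<Sum>i<length ts. card ((Cons i) ` nodes (ts ! i)))"
    by (rule card_UN_disjoint) (auto simp: finite_nodes)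
  finally show ?thesis
    by (simp add: card_image tsize_def)
qed

lemma tsize_ge_1: "tsize t \<ge> 1"
  by (cases t) (simp add: tsize_Node)

lemma tsize_Node_Cons: "tsize (Node (c # ts)) = tsize c + tsize (Node ts)"
  unfolding tsize_Node length_Cons sum.lessThan_Suc_shift by simp

lemma otree_Cons_induct [case_names Nil Cons]:
  assumes "P (Node [])" and "\<And>c ts. P c \<Longrightarrow> P (Node ts) \<Longrightarrow> P (Node (c # ts))"
  shows "P t"
proof (induction t rule: measure_induct_rule[of size])
  case (less t)
  obtain ts where t: "t = Node ts"
    by (cases t)
  show ?case
  proof (cases ts)
    case Nil
    then show ?thesis using t assms(1) by simp
  next
    case (Cons c ts')
    have "P c" and "P (Node ts')"
      by (rule less; simp add: t Cons)+
    then show ?thesis using assms(2) t Cons by simp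
  qed
qed

lemma contour_seq_Node_Nil [simp]: "contour_seq (Node []) = [0]"
  by simp

lemma contour_seq_Node_Cons [simp]:
  "contour_seq (Node (c # ts)) = 0 # map Suc (contour_seq c) @ contour_seq (Node ts)"
  by simp

declare contour_seq.simps [simp del]

lemma length_contour_seq: "length (contour_seq t) + 1 = 2 * tsize t"
proof (induction t rule: otree_Cons_induct)
  case Nil
  show ?case by (simp add: tsize_Node)
next
  case (Cons c ts)
  then show ?case by (simp add: tsize_Node_Cons)
qed

lemma contour_seq_not_Nil: "contour_seq t \<noteq> []"
  by (cases t) (simp add: contour_seq.simps)

lemma contour_seq_nth_0: "contour_seq t ! 0 = 0"
  by (cases t) (simp add: contour_seq.simps)

lemma contour_seq_last: "last (contour_seq t) = 0"
  by (induction t rule: otree_Cons_induct) (simp_all add: contour_seq_not_Nil)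

definition unit_steps :: "nat list \<Rightarrow> bool" where
  "unit_steps c \<longleftrightarrow> (\<forall>i. Suc i < length c \<longrightarrow> c ! Suc i = Suc (c ! i) \<or> c ! i = Suc (c ! Suc i))"

lemma unit_steps_Cons_map_Suc_append:
  assumes "unit_steps a" "unit_steps b" "a \<noteq> []" "b \<noteq> []" "a ! 0 = 0" "last a = 0" "b ! 0 = 0"
  shows "unit_steps (0 # map Suc a @ b)"
  unfolding unit_steps_def
proof (intro allI impI)
  fix i
  let ?c = "0 # map Suc a @ b"
  assume i: "Suc i < length ?c"
  consider "i = 0" | "0 < i" "i < length a" | "i = length a" | "length a < i"
    by linarith
  then show "?c ! Suc i = Suc (?c ! i) \<or> ?c ! i = Suc (?c ! Suc i)"
  proof cases
    case 1
    then show ?thesis using assms(3,5) by (simp add: nth_append)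
  next
    case 2
    then obtain j where i_eq: "i = Suc j" and "Suc j < length a"
      using not0_implies_Suc by blast
    then have "a ! Suc j = Suc (a ! j) \<or> a ! j = Suc (a ! Suc j)"
      using assms(1) unfolding unit_steps_def by blast
    then show ?thesis unfolding i_eq using \<open>Suc j < length a\<close> by (simp add: nth_append)
  next
    case 3
    then show ?thesis using assms(3,6,7) by (simp add: nth_append last_conv_nth)
  next
    case 4
    define j where "j = i - length a - 1"
    have "Suc j < length b" and i_eq: "i = Suc (length a + j)"
      using 4 i by (auto simp: j_def)
    then have "b ! Suc j = Suc (b ! j) \<or> b ! j = Suc (b ! Suc j)"
      using assms(2) unfolding unit_steps_def by blast
    then show ?thesis unfolding i_eq by (simp add: nth_append)
  qed
qed

lemma unit_steps_contour_seq: "unit_steps (contour_seq t)"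
proof (induction t rule: otree_Cons_induct)
  case Nil
  show ?case by (simp add: unit_steps_def)
next
  case (Cons c ts)
  then show ?case
    unfolding contour_seq_Node_Cons
    by (intro unit_steps_Cons_map_Suc_append) (simp_all add: contour_seq_not_Nil contour_seq_nth_0 contour_seq_last)
qed

section \<open>The recursion for \<open>D_k\<close>\<close>

lemma foldl_lcp_Cons:
  assumes "\<forall>j\<in>set xs. u j = i # w j"
  shows "foldl (\<lambda>acc j. lcp acc (u j)) (i # a) xs = i # foldl (\<lambda>acc j. lcp acc (w j)) a xs"
  using assms by (induction xs arbitrary: a) auto

lemma mrca_Cons:
  assumes "k \<ge> 1" and "\<forall>j<k. u j = i # w j"
  shows "mrca u k = i # mrca w k"
  using assms foldl_lcp_Cons[of "[1..<k]" u i w "w 0"] by (simp add: mrca_def)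

lemma lcp_prefixes: "(\<exists>r. a = lcp a b @ r) \<and> (\<exists>r. b = lcp a b @ r)"
  by (induction a b rule: lcp.induct) auto

lemma foldl_lcp_prefixes:
  "(\<exists>r. acc = foldl (\<lambda>acc j. lcp acc (u j)) acc xs @ r) \<and>
   (\<forall>j\<in>set xs. \<exists>r. u j = foldl (\<lambda>acc j. lcp acc (u j)) acc xs @ r)"
proof (induction xs arbitrary: acc)
  case Nil
  then show ?case by simp
next
  case (Cons x xs)
  let ?F = "foldl (\<lambda>acc j. lcp acc (u j)) (lcp acc (u x)) xs"
  from Cons[of "lcp acc (u x)"] obtain r where r: "lcp acc (u x) = ?F @ r"
    and R: "\<forall>j\<in>set xs. \<exists>r. u j = ?F @ r" by auto
  obtain r1 r2 where "acc = lcp acc (u x) @ r1" "u x = lcp acc (u x) @ r2"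
    using lcp_prefixes by metis
  then have "acc = ?F @ (r @ r1)" "u x = ?F @ (r @ r2)"
    using r by (metis append.assoc)+
  then show ?case using R by auto
qed

lemma mrca_prefix: "j < k \<Longrightarrow> \<exists>r. u j = mrca u k @ r"
  unfolding mrca_def using foldl_lcp_prefixes[of "u 0" u "[1..<k]"]
  by (cases "j = 0") auto

definition subtree_tuples :: "otree list \<Rightarrow> nat \<Rightarrow> nat \<Rightarrow> (nat \<Rightarrow> nat list) set" where
  "subtree_tuples ts k i = (\<lambda>w. restrict (\<lambda>j. i # w j) {..<k}) ` PiE {..<k} (\<lambda>_. nodes (ts ! i))"

lemma subtree_tuples_subset: "subtree_tuples ts k i \<subseteq> PiE {..<k} (\<lambda>_. nodes (Node ts))"
  if "i < length ts"
  using that by (auto simp: subtree_tuples_def PiE_iff)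

lemma subtree_tuples_disjoint:
  assumes "k \<ge> 1" and "i \<noteq> i'"
  shows "subtree_tuples ts k i \<inter> subtree_tuples ts k i' = {}"
proof -
  have "hd (u 0) = i" if u: "u \<in> subtree_tuples ts k i" for u i
  proof -
    obtain w where "u = restrict (\<lambda>j. i # w j) {..<k}"
      using u unfolding subtree_tuples_def by blast
    then show ?thesis
      using assms(1) by simp
  qed
  then show ?thesis
    using assms(2) by blast
qed

lemma mrca_Cons_in_subtree_tuples:
  assumes k: "k \<ge> 1" and u: "u \<in> PiE {..<k} (\<lambda>_. nodes (Node ts))" and m: "mrca u k = i # r"
  shows "i < length ts \<and> u \<in> subtree_tuples ts k i"
proof -
  define w where "w = restrict (\<lambda>j. tl (u j)) {..<k}"
  have u_eq: "u j = i # w j" if "j < k" for j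
    using mrca_prefix[OF that, of u] m that by (auto simp: w_def)
  have u_nodes: "i < length ts \<and> w j \<in> nodes (ts ! i)" if "j < k" for j
  proof -
    have "u j \<in> nodes (Node ts)"
      using PiE_mem[OF u] that by blast
    then show ?thesis
      unfolding u_eq[OF that] Cons_in_nodes_Node .
  qed
  then have i: "i < length ts"
    using k by auto
  have "w \<in> PiE {..<k} (\<lambda>_. nodes (ts ! i))"
    using u_nodes by (auto simp: w_def)
  moreover have "u = restrict (\<lambda>j. i # w j) {..<k}"
    using u u_eq by (auto simp: PiE_def extensional_def)
  ultimately show ?thesis
    using i by (auto simp: subtree_tuples_def)
qed

lemma sum_mrca_subtree_tuples:
  assumes "k \<ge> 1"
  shows "(\<Sum>u\<in>subtree_tuples ts k i. length (mrca u k)) = tsize (ts ! i) ^ k + Dk (ts ! i) k"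
proof -
  let ?P = "PiE {..<k} (\<lambda>_. nodes (ts ! i))" and ?cons = "\<lambda>w. restrict (\<lambda>j. i # w j) {..<k}"
  have "inj_on ?cons ?P"
  proof (rule inj_onI)
    fix v w assume "v \<in> ?P" "w \<in> ?P" and eq: "?cons v = ?cons w"
    have "v j = w j" if "j < k" for j
      using fun_cong[OF eq, of j] that by simp
    then show "v = w"
      using \<open>v \<in> ?P\<close> \<open>w \<in> ?P\<close> by (auto intro: PiE_ext)
  qed
  then have "(\<Sum>u\<in>subtree_tuples ts k i. length (mrca u k)) = (\<Sum>w\<in>?P. length (mrca (?cons w) k))"
    unfolding subtree_tuples_def by (simp add: sum.reindex)
  also have "\<dots> = (\<Sum>w\<in>?P. 1 + length (mrca w k))"
  proof (rule sum.cong[OF refl])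
    fix w
    have "mrca (?cons w) k = i # mrca w k"
      by (rule mrca_Cons[OF assms]) simp
    then show "length (mrca (?cons w) k) = 1 + length (mrca w k)"
      by simp
  qed
  also have "\<dots> = tsize (ts ! i) ^ k + Dk (ts ! i) k"
    unfolding sum.distrib by (simp add: Dk_def card_PiE tsize_def)
  finally show ?thesis .
qed

lemma Dk_Node:
  assumes k: "k \<ge> 1"
  shows "Dk (Node ts) k = (\<Sum>i<length ts. tsize (ts ! i) ^ k + Dk (ts ! i) k)"
proof -
  let ?A = "subtree_tuples ts k"
  have finite_A: "finite (?A i)" for i
    by (simp add: subtree_tuples_def finite_PiE finite_nodes)
  have "Dk (Node ts) k = (\<Sum>u\<in>(\<Union>i<length ts. ?A i). length (mrca u k))"
    unfolding Dk_def
  proof (rule sum.mono_neutral_right)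
    show "\<forall>u\<in>PiE {..<k} (\<lambda>_. nodes (Node ts)) - (\<Union>i<length ts. ?A i). length (mrca u k) = 0"
    proof
      fix u assume u: "u \<in> PiE {..<k} (\<lambda>_. nodes (Node ts)) - (\<Union>i<length ts. ?A i)"
      show "length (mrca u k) = 0"
      proof (cases "mrca u k")
        case (Cons i r)
        then show ?thesis using mrca_Cons_in_subtree_tuples[OF k _ Cons] u by blast
      qed simp
    qed
  next
    show "(\<Union>i<length ts. ?A i) \<subseteq> PiE {..<k} (\<lambda>_. nodes (Node ts))"
      using subtree_tuples_subset by blast
  qed (simp add: finite_PiE finite_nodes)
  also have "\<dots> = (\<Sum>i<length ts. \<Sum>u\<in>?A i. length (mrca u k))"
    using subtree_tuples_disjoint[OF k] finite_A by (intro sum.UNION_disjoint) auto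
  finally show ?thesis
    using sum_mrca_subtree_tuples[OF k] by simp
qed

lemma Dk_Node_Nil: "k \<ge> 1 \<Longrightarrow> Dk (Node []) k = 0"
  by (simp add: Dk_Node)

lemma Dk_Node_Cons: "k \<ge> 1 \<Longrightarrow> Dk (Node (c # ts)) k = tsize c ^ k + Dk c k + Dk (Node ts) k"
  unfolding Dk_Node length_Cons sum.lessThan_Suc_shift by simp

section \<open>Excursions\<close>

text \<open>In a contour sequence the excursions are exactly the visits of the non-root nodes: the walk
  enters the node at time \<open>p\<close> and leaves it for its parent at time \<open>q\<close>.\<close>
definition excursions :: "nat list \<Rightarrow> (nat \<times> nat) set" where
  "excursions c = {(p, q). p < q \<and> q < length c \<and> c ! p = c ! q \<and> (\<forall>i. p < i \<and> i < q \<longrightarrow> c ! q < c ! i)}"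

definition shift :: "nat \<Rightarrow> nat \<times> nat \<Rightarrow> nat \<times> nat" where
  "shift m = (\<lambda>(p, q). (p + m, q + m))"

lemma shift_apply [simp]: "shift m (p, q) = (p + m, q + m)"
  by (simp add: shift_def)

lemma inj_shift: "inj (shift m)"
  by (auto simp: inj_def shift_def)

lemma finite_excursions: "finite (excursions c)"
  by (rule finite_subset[of _ "{..<length c} \<times> {..<length c}"]) (auto simp: excursions_def)

lemma excursions_singleton: "excursions [x] = {}"
  by (auto simp: excursions_def)

lemma excursions_map_Suc: "excursions (map Suc a) = excursions a"
  by (auto simp: excursions_def)

lemma excursions_append_left:
  "q < length xs \<Longrightarrow> (p, q) \<in> excursions (xs @ ys) \<longleftrightarrow> (p, q) \<in> excursions xs"
  by (auto simp: excursions_def nth_append)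

lemma excursions_append_right:
  "shift (length xs) e \<in> excursions (xs @ ys) \<longleftrightarrow> e \<in> excursions ys"
proof -
  obtain p q where e: "e = (p, q)"
    by fastforce
  have "(\<forall>i. p + length xs < i \<and> i < q + length xs \<longrightarrow> (xs @ ys) ! (q + length xs) < (xs @ ys) ! i)
      \<longleftrightarrow> (\<forall>i. p < i \<and> i < q \<longrightarrow> ys ! q < ys ! i)"
  proof
    assume "\<forall>i. p + length xs < i \<and> i < q + length xs \<longrightarrow> (xs @ ys) ! (q + length xs) < (xs @ ys) ! i"
    then show "\<forall>i. p < i \<and> i < q \<longrightarrow> ys ! q < ys ! i"
      by (auto dest: spec[of _ "_ + length xs"] simp: nth_append)
  next
    assume between: "\<forall>i. p < i \<and> i < q \<longrightarrow> ys ! q < ys ! i"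
    show "\<forall>i. p + length xs < i \<and> i < q + length xs \<longrightarrow> (xs @ ys) ! (q + length xs) < (xs @ ys) ! i"
    proof (intro allI impI)
      fix i assume i: "p + length xs < i \<and> i < q + length xs"
      then have "p < i - length xs \<and> i - length xs < q"
        by linarith
      then show "(xs @ ys) ! (q + length xs) < (xs @ ys) ! i"
        using between i by (simp add: nth_append)
    qed
  qed
  then show ?thesis
    unfolding e excursions_def by (simp add: nth_append)
qed

lemma excursions_Cons: "(p + 1, q + 1) \<in> excursions (x # xs) \<longleftrightarrow> (p, q) \<in> excursions xs"
  using excursions_append_right[where xs = "[x]" and ys = xs and e = "(p, q)"] by simp

lemma excursions_0_Cons_map_Suc: "excursions (0 # map Suc a) = shift 1 ` excursions a"
proof (intro equalityI subsetI)
  fix e assume e: "e \<in> excursions (0 # map Suc a)"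
  obtain p q where pq: "e = (p, q)"
    by fastforce
  have "0 < q" "q < length a + 1" "(0 # map Suc a) ! p = (0 # map Suc a) ! q"
    using e unfolding pq excursions_def by auto
  then obtain p' q' where "p = p' + 1" "q = q' + 1"
    by (cases p; cases q) auto
  then show "e \<in> shift 1 ` excursions a"
    using e excursions_Cons[of p' q' 0 "map Suc a"] unfolding pq excursions_map_Suc by force
next
  fix e assume "e \<in> shift 1 ` excursions a"
  then show "e \<in> excursions (0 # map Suc a)"
    using excursions_Cons[of _ _ 0 "map Suc a"] unfolding excursions_map_Suc by auto
qed

lemma excursion_across_junction:
  assumes b0: "b ! 0 = 0" and e: "(p, q) \<in> excursions (0 # map Suc a @ b)"
    and pq: "p \<le> length a" "length a + 1 \<le> q"
  shows "(p, q) = (0, length a + 1)"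
proof -
  let ?c = "0 # map Suc a @ b"
  \<comment> \<open>the excursion cannot pass over the return to height \<open>0\<close> at the start of \<open>b\<close>\<close>
  have "q = length a + 1"
  proof (rule ccontr)
    assume "q \<noteq> length a + 1"
    then have "p < length a + 1" "length a + 1 < q"
      using pq by auto
    then have "?c ! q < ?c ! (length a + 1)"
      using e unfolding excursions_def by blast
    then show False
      using b0 by (simp add: nth_append)
  qed
  then have "?c ! p = 0"
    using e b0 unfolding excursions_def by (simp add: nth_append)
  then have "p = 0"
    using pq by (cases p) (auto simp: nth_append)
  then show ?thesis
    using \<open>q = length a + 1\<close> by simp
qed

text \<open>For the contour of \<open>Node (c # ts)\<close>: the visit of the root of \<open>c\<close>, the excursions
  inside \<open>c\<close> (one level up), and those of \<open>Node ts\<close>.\<close>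
lemma excursions_Cons_map_Suc_append:
  assumes b: "b \<noteq> []" "b ! 0 = 0"
  shows "excursions (0 # map Suc a @ b) =
    insert (0, length a + 1) (shift 1 ` excursions a \<union> shift (length a + 1) ` excursions b)"
    (is "excursions ?c = ?R")
proof (intro equalityI subsetI)
  fix e assume e: "e \<in> excursions ?c"
  obtain p q where pq: "e = (p, q)"
    by fastforce
  have c_split: "?c = (0 # map Suc a) @ b"
    by simp
  consider "q \<le> length a" | "length a + 1 \<le> p" | "p \<le> length a" "length a + 1 \<le> q"
    by linarith
  then show "e \<in> ?R"
  proof cases
    case 1
    then show ?thesis
      using e excursions_append_left[of q "0 # map Suc a" p b] excursions_0_Cons_map_Suc
      unfolding pq c_split by simp
  next
    case 2
    then have "e = shift (length a + 1) (p - (length a + 1), q - (length a + 1))"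
      using e pq by (auto simp: excursions_def)
    then show ?thesis
      using e excursions_append_right[where xs = "0 # map Suc a" and ys = b] by force
  next
    case 3
    then show ?thesis
      using excursion_across_junction[OF b(2) e[unfolded pq]] pq by simp
  qed
next
  fix e assume "e \<in> ?R"
  then consider "e = (0, length a + 1)" | "e \<in> excursions (0 # map Suc a)" "snd e < length a + 1"
    | "e \<in> shift (length a + 1) ` excursions b"
    unfolding excursions_0_Cons_map_Suc[symmetric] by (auto simp: excursions_def)
  then show "e \<in> excursions ?c"
  proof cases
    case 1
    then show ?thesis
      using b by (auto simp: excursions_def nth_append nth_Cons')
  next
    case 2
    then show ?thesis
      using excursions_append_left[of "snd e" "0 # map Suc a" "fst e" b] by simp
  next
    case 3
    then show ?thesis
      using excursions_append_right[where xs = "0 # map Suc a" and ys = b] by auto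
  qed
qed

lemma sum_excursions_contour_seq_Node_Cons:
  fixes g :: "nat \<Rightarrow> 'b::comm_monoid_add"
  shows "(\<Sum>(p, q)\<in>excursions (contour_seq (Node (c # ts))). g (q - p)) =
    g (2 * tsize c) + (\<Sum>(p, q)\<in>excursions (contour_seq c). g (q - p))
      + (\<Sum>(p, q)\<in>excursions (contour_seq (Node ts)). g (q - p))"
proof -
  let ?a = "contour_seq c" and ?b = "contour_seq (Node ts)"
  let ?A = "shift 1 ` excursions ?a" and ?B = "shift (length ?a + 1) ` excursions ?b"
  have "?A \<inter> ?B = {}"
    by (auto simp: excursions_def)
  moreover have "(0, length ?a + 1) \<notin> ?A \<union> ?B"
    by auto
  moreover have "(\<Sum>(p, q)\<in>shift m ` E. g (q - p)) = (\<Sum>(p, q)\<in>E. g (q - p))" for m E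
  proof -
    have inj: "inj_on (shift m) E"
      using inj_shift by (rule inj_on_subset) simp
    show ?thesis
      unfolding sum.reindex[OF inj] by (simp add: shift_def case_prod_beta)
  qed
  ultimately show ?thesis
    unfolding contour_seq_Node_Cons
    using excursions_Cons_map_Suc_append[OF contour_seq_not_Nil contour_seq_nth_0, of ?a]
    by (simp add: finite_excursions sum.union_disjoint length_contour_seq[symmetric] add.assoc)
qed

lemma Dk_eq_sum_excursions:
  assumes "k \<ge> 1"
  shows "Dk t k = (\<Sum>(p, q)\<in>excursions (contour_seq t). ((q - p) div 2) ^ k)"
proof (induction t rule: otree_Cons_induct)
  case Nil
  show ?case by (simp add: excursions_singleton Dk_Node_Nil[OF assms])
next
  case (Cons c ts)
  then show ?case
    unfolding sum_excursions_contour_seq_Node_Cons[where g = "\<lambda>d. (d div 2) ^ k"] Dk_Node_Cons[OF assms]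
    by simp
qed

lemma power_add_le_power_sum: "k \<ge> 1 \<Longrightarrow> (x::nat) ^ k + y ^ k \<le> (x + y) ^ k"
proof (induction k rule: nat_induct_at_least)
  case base
  then show ?case by simp
next
  case (Suc k)
  have "x ^ Suc k + y ^ Suc k \<le> (x + y) * x ^ k + (x + y) * y ^ k"
    by (intro add_mono mult_right_mono) auto
  also have "\<dots> \<le> (x + y) * (x + y) ^ k"
    using Suc.IH by (simp add: distrib_left[symmetric])
  finally show ?case by simp
qed

lemma sum_excursions_power_le:
  assumes "k \<ge> 1"
  shows "(\<Sum>(p, q)\<in>excursions (contour_seq t). ((q - p) div 2) ^ k)
    \<le> (\<Sum>(p, q)\<in>excursions (contour_seq t). ((q - p) div 2 - 1) ^ k) + (tsize t - 1) ^ k"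
proof (induction t rule: otree_Cons_induct)
  case Nil
  show ?case by (simp add: excursions_singleton)
next
  case (Cons c ts)
  have "tsize c ^ k + (tsize (Node ts) - 1) ^ k \<le> (tsize c + tsize (Node ts) - 1) ^ k"
    using power_add_le_power_sum[OF assms, of "tsize c" "tsize (Node ts) - 1"] tsize_ge_1[of "Node ts"]
    by simp
  then show ?case
    using Cons unfolding tsize_Node_Cons
      sum_excursions_contour_seq_Node_Cons[where g = "\<lambda>d. (d div 2) ^ k"]
      sum_excursions_contour_seq_Node_Cons[where g = "\<lambda>d. (d div 2 - 1) ^ k"]
    by simp
qed

section \<open>The contour as a piecewise linear function\<close>

definition lin_interp :: "nat list \<Rightarrow> real \<Rightarrow> real" where
  "lin_interp c s = (let n = nat \<lfloor>s\<rfloor> in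
     if 0 \<le> s \<and> n + 1 < length c
     then real (c ! n) + (s - real n) * (real (c ! (n + 1)) - real (c ! n))
     else 0)"

lemma contour_eq_lin_interp: "contour t = lin_interp (contour_seq t)"
  by (simp add: contour_def lin_interp_def fun_eq_iff Let_def)

lemma lin_interp_nonneg: "lin_interp c s \<ge> 0"
proof (cases "0 \<le> s \<and> nat \<lfloor>s\<rfloor> + 1 < length c")
  case True
  let ?n = "nat \<lfloor>s\<rfloor>"
  have "0 \<le> s - real ?n" "s - real ?n \<le> 1"
    using True by linarith+
  then have "(1 - (s - real ?n)) * real (c ! ?n) + (s - real ?n) * real (c ! (?n + 1)) \<ge> 0"
    by simp
  then show ?thesis
    using True by (simp add: lin_interp_def Let_def algebra_simps)
qed (auto simp: lin_interp_def Let_def)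

locale dyck_path =
  fixes c :: "nat list"
  assumes not_Nil: "c \<noteq> []" and nth_0: "c ! 0 = 0" and last: "last c = 0"
    and unit_steps: "unit_steps c"
begin

lemma step: "Suc i < length c \<Longrightarrow> c ! Suc i = Suc (c ! i) \<or> c ! i = Suc (c ! Suc i)"
  using unit_steps by (auto simp: unit_steps_def)

lemma even_nth_plus: "i < length c \<Longrightarrow> even (c ! i + i)"
proof (induction i)
  case 0
  then show ?case by (simp add: nth_0)
next
  case (Suc i)
  then show ?case
    using step[of i] by auto
qed

lemma excursion_half_length:
  assumes "(p, q) \<in> excursions c"
  shows "real q - real p = 2 * real ((q - p) div 2)" and "(q - p) div 2 \<ge> 1"
proof -
  have pq: "p < q" "q < length c" and eq: "c ! p = c ! q"
    using assms by (auto simp: excursions_def)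
  have "even (c ! p + p)" "even (c ! q + q)"
    by (rule even_nth_plus; use pq in simp)+
  then have "even (q - p)" "q - p \<noteq> 0"
    using eq pq by presburger+
  then have "q - p = 2 * ((q - p) div 2)" "(q - p) div 2 \<ge> 1"
    by presburger+
  then show "real q - real p = 2 * real ((q - p) div 2)" and "(q - p) div 2 \<ge> 1"
    using pq(1) by (metis of_nat_diff less_imp_le of_nat_mult of_nat_numeral)+
qed

lemma lin_interp_segment:
  assumes "i + 1 < length c" "real i \<le> s" "s \<le> real i + 1"
  shows "lin_interp c s = real (c ! i) + (s - real i) * (real (c ! (i + 1)) - real (c ! i))"
proof (cases "s < real i + 1")
  case True
  then have "nat \<lfloor>s\<rfloor> = i"
    using assms(2) by linarith
  then show ?thesis
    using assms(1,2) by (simp add: lin_interp_def)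
next
  case False
  then have s: "s = real (i + 1)"
    using assms(3) by simp
  show ?thesis
  proof (cases "i + 2 < length c")
    case True
    have "nat \<lfloor>s\<rfloor> = i + 1"
      unfolding s by (simp only: floor_of_nat nat_int)
    then show ?thesis
      using True unfolding lin_interp_def by (simp add: s)
  next
    case False
    then have "i + 1 = length c - 1"
      using assms(1) by simp
    then have "c ! (i + 1) = 0"
      using last not_Nil by (simp add: last_conv_nth)
    then show ?thesis
      unfolding s lin_interp_def using False by (simp add: Let_def)
  qed
qed

lemma lin_interp_of_nat: "j < length c \<Longrightarrow> lin_interp c (real j) = real (c ! j)"
proof (cases "j + 1 < length c")
  case True
  then show ?thesis using lin_interp_segment[of j "real j"] by simp
next
  case False
  assume "j < length c"
  then have "j = length c - 1"
    using False by simp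
  then have "c ! j = 0"
    using last not_Nil by (simp add: last_conv_nth)
  then show ?thesis
    using False by (simp add: lin_interp_def)
qed

lemma lin_interp_segment_bounds:
  assumes "i + 1 < length c" "real i \<le> s" "s \<le> real i + 1"
  shows "min (real (c ! i)) (real (c ! (i + 1))) \<le> lin_interp c s"
    and "lin_interp c s \<le> max (real (c ! i)) (real (c ! (i + 1)))"
proof -
  define \<theta> where "\<theta> = s - real i"
  let ?x = "real (c ! i)" and ?y = "real (c ! (i + 1))"
  have \<theta>: "0 \<le> \<theta>" "\<theta> \<le> 1"
    using assms by (auto simp: \<theta>_def)
  have e: "lin_interp c s = (1 - \<theta>) * ?x + \<theta> * ?y"
    using lin_interp_segment[OF assms] by (simp add: \<theta>_def algebra_simps)
  have "(1 - \<theta>) * min ?x ?y + \<theta> * min ?x ?y \<le> (1 - \<theta>) * ?x + \<theta> * ?y"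
    and "(1 - \<theta>) * ?x + \<theta> * ?y \<le> (1 - \<theta>) * max ?x ?y + \<theta> * max ?x ?y"
    using \<theta> by (intro add_mono mult_left_mono; simp)+
  then show "min ?x ?y \<le> lin_interp c s" and "lin_interp c s \<le> max ?x ?y"
    unfolding e by (simp_all add: algebra_simps)
qed

lemma lin_interp_segment_dist:
  assumes "i + 1 < length c" "real i \<le> s" "s \<le> real i + 1" "real i \<le> s'" "s' \<le> real i + 1"
  shows "\<bar>lin_interp c s - lin_interp c s'\<bar> \<le> \<bar>s - s'\<bar>"
proof -
  have "lin_interp c s - lin_interp c s' = (s - s') * (real (c ! (i + 1)) - real (c ! i))"
    using lin_interp_segment[of i s] lin_interp_segment[of i s'] assms by (simp add: algebra_simps)
  moreover have "\<bar>real (c ! (i + 1)) - real (c ! i)\<bar> = 1"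
    using step[of i] assms(1) by auto
  ultimately show ?thesis
    by (simp add: abs_mult)
qed

lemma lin_interp_outside:
  assumes "s \<le> 0 \<or> s \<ge> real (length c - 1)"
  shows "lin_interp c s = 0"
proof (cases "s = 0")
  case True
  then show ?thesis
    using lin_interp_of_nat[of 0] not_Nil nth_0 by simp
next
  case False
  have "\<not> nat \<lfloor>s\<rfloor> + 1 < length c" if "real (length c - 1) \<le> s"
  proof -
    have "int (length c - 1) \<le> \<lfloor>s\<rfloor>"
      using that by (simp add: le_floor_iff)
    then show ?thesis
      by linarith
  qed
  then show ?thesis
    using assms False by (auto simp: lin_interp_def Let_def)
qed

text \<open>\<open>j\<close> bounds the number of unit segments crossed between \<open>s\<close> and \<open>s'\<close>.\<close>
lemma lin_interp_dist_le_segments: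
  assumes "0 \<le> s" "s \<le> s'" "s' \<le> real (length c - 1)" "s' \<le> real (nat \<lfloor>s\<rfloor>) + real j"
  shows "\<bar>lin_interp c s - lin_interp c s'\<bar> \<le> s' - s"
  using assms
proof (induction j arbitrary: s)
  case 0
  then have "s = s'"
    by linarith
  then show ?case
    by simp
next
  case (Suc j)
  let ?i = "nat \<lfloor>s\<rfloor>"
  have i: "real ?i \<le> s" "s < real ?i + 1"
    using Suc.prems by linarith+
  show ?case
  proof (cases "s' \<le> real ?i + 1")
    case True
    show ?thesis
    proof (cases "?i + 1 < length c")
      case True
      moreover have "real ?i \<le> s'"
        using i Suc.prems by linarith
      ultimately show ?thesis
        using lin_interp_segment_dist[of ?i s s'] i Suc.prems \<open>s' \<le> real ?i + 1\<close> by simp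
    next
      case False
      then have "s = s'"
        using Suc.prems i by linarith
      then show ?thesis
        by simp
    qed
  next
    case False
    define m where "m = real ?i + 1"
    have "?i + 1 < length c"
      using False Suc.prems by linarith
    then have "\<bar>lin_interp c s - lin_interp c m\<bar> \<le> m - s"
      using lin_interp_segment_dist[of ?i s m] i by (simp add: m_def)
    moreover have "nat \<lfloor>m\<rfloor> = ?i + 1"
      unfolding m_def by linarith
    then have "\<bar>lin_interp c m - lin_interp c s'\<bar> \<le> s' - m"
      using Suc.IH[of m] Suc.prems False i by (simp add: m_def)
    ultimately show ?thesis
      by linarith
  qed
qed

lemma lin_interp_dist_inside:
  assumes "0 \<le> s" "s \<le> s'" "s' \<le> real (length c - 1)"
  shows "\<bar>lin_interp c s - lin_interp c s'\<bar> \<le> s' - s"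
proof -
  obtain j :: nat where "s' \<le> real j"
    using real_arch_simple by blast
  then have "s' \<le> real (nat \<lfloor>s\<rfloor>) + real j"
    using assms(1) by linarith
  then show ?thesis
    using lin_interp_dist_le_segments assms by blast
qed

lemma lin_interp_lipschitz: "\<bar>lin_interp c s - lin_interp c s'\<bar> \<le> \<bar>s - s'\<bar>"
proof -
  define L where "L = real (length c - 1)"
  define clamp where "clamp x = max 0 (min L x)" for x
  have "L \<ge> 0"
    by (simp add: L_def)
  have lin_interp_clamp: "lin_interp c (clamp x) = lin_interp c x" for x
  proof (cases "0 \<le> x \<and> x \<le> L")
    case False
    then have "clamp x = 0 \<or> clamp x = L"
      by (auto simp: clamp_def)
    then show ?thesis
      using lin_interp_outside False by (auto simp: L_def)
  qed (simp add: clamp_def)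
  have "\<bar>lin_interp c (clamp s) - lin_interp c (clamp s')\<bar> \<le> \<bar>clamp s - clamp s'\<bar>"
    using lin_interp_dist_inside[of "clamp s" "clamp s'"] lin_interp_dist_inside[of "clamp s'" "clamp s"] \<open>L \<ge> 0\<close>
    by (cases "clamp s \<le> clamp s'") (auto simp: clamp_def L_def abs_minus_commute)
  moreover have "\<bar>clamp s - clamp s'\<bar> \<le> \<bar>s - s'\<bar>"
    unfolding clamp_def by (simp add: min_def max_def abs_if)
  ultimately show ?thesis
    unfolding lin_interp_clamp by simp
qed

end

lemma dyck_path_contour_seq: "dyck_path (contour_seq t)"
  by unfold_locales (simp_all add: contour_seq_not_Nil contour_seq_nth_0 contour_seq_last unit_steps_contour_seq)

section \<open>Minima of the contour over intervals\<close>

lemma minf_le: "s \<in> {min a b..max a b} \<Longrightarrow> (\<And>x. h x \<ge> 0) \<Longrightarrow> minf h a b \<le> h s"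
  unfolding minf_def by (rule cInf_lower) (auto intro: bdd_belowI[of _ 0])

lemma minf_ge: "(\<And>s. s \<in> {min a b..max a b} \<Longrightarrow> m \<le> h s) \<Longrightarrow> m \<le> minf h a b"
  unfolding minf_def by (rule cInf_greatest) auto

lemma minf_nonneg: "(\<And>x. h x \<ge> 0) \<Longrightarrow> minf h a b \<ge> 0"
  by (rule minf_ge) auto

lemma minf_le_minf_add_dist:
  assumes nonneg: "\<And>x. h x \<ge> 0" and lip: "\<And>x y. \<bar>h x - h y\<bar> \<le> \<bar>x - y\<bar>"
  shows "minf h a b \<le> minf h a' b' + (\<bar>a - a'\<bar> + \<bar>b - b'\<bar>)"
proof -
  have "minf h a b - (\<bar>a - a'\<bar> + \<bar>b - b'\<bar>) \<le> minf h a' b'"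
  proof (rule minf_ge)
    fix y assume y: "y \<in> {min a' b'..max a' b'}"
    \<comment> \<open>the point of \<open>[a, b]\<close> nearest to \<open>y\<close> is within \<open>\<bar>a - a'\<bar> + \<bar>b - b'\<bar>\<close> of it\<close>
    define y' where "y' = max (min a b) (min (max a b) y)"
    have "minf h a b \<le> h y'"
      by (rule minf_le) (auto simp: y'_def nonneg)
    moreover have "h y' \<le> h y + \<bar>y - y'\<bar>"
      using lip[of y' y] by linarith
    moreover have "\<bar>y - y'\<bar> \<le> \<bar>a - a'\<bar> + \<bar>b - b'\<bar>"
      using y unfolding y'_def by (simp add: min_def max_def abs_if split: if_splits)
    ultimately show "minf h a b - (\<bar>a - a'\<bar> + \<bar>b - b'\<bar>) \<le> h y"
      by linarith
  qed
  then show ?thesis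
    by linarith
qed

lemma minf_lipschitz:
  assumes "\<And>x. h x \<ge> 0" and "\<And>x y. \<bar>h x - h y\<bar> \<le> \<bar>x - y\<bar>"
  shows "\<bar>minf h a b - minf h a' b'\<bar> \<le> \<bar>a - a'\<bar> + \<bar>b - b'\<bar>"
  using minf_le_minf_add_dist[OF assms, of a b a' b'] minf_le_minf_add_dist[OF assms, of a' b' a b] by linarith

lemma borel_measurable_minf:
  assumes "\<And>x. h x \<ge> 0" and "\<And>x y. \<bar>h x - h y\<bar> \<le> \<bar>x - y\<bar>"
    and "f \<in> borel_measurable M" "g \<in> borel_measurable M"
  shows "(\<lambda>x. minf h (f x) (g x)) \<in> borel_measurable M"
proof (rule borel_measurable_continuous_Pair[OF assms(3,4)])
  show "continuous_on UNIV (\<lambda>x. minf h (fst x) (snd x))"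
  proof (rule lipschitz_on_continuous_on, rule lipschitz_onI)
    fix x y :: "real \<times> real"
    have "dist (minf h (fst x) (snd x)) (minf h (fst y) (snd y)) \<le> dist (fst x) (fst y) + dist (snd x) (snd y)"
      using minf_lipschitz[OF assms(1,2)] by (simp add: dist_real_def)
    also have "\<dots> \<le> 2 * dist x y"
      using dist_fst_le[of x y] dist_snd_le[of x y] by linarith
    finally show "dist (minf h (fst x) (snd x)) (minf h (fst y) (snd y)) \<le> 2 * dist x y" .
  qed simp
qed

context dyck_path
begin

lemma lin_interp_above_excursion:
  assumes e: "(p, q) \<in> excursions c" and s: "real p + 1 \<le> s" "s \<le> real q - 1"
  shows "real (c ! p) + 1 \<le> lin_interp c s"
proof -
  have pq: "q < length c" "c ! p = c ! q" and between: "\<And>i. p < i \<Longrightarrow> i < q \<Longrightarrow> c ! q < c ! i"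
    using e by (auto simp: excursions_def)
  let ?n = "nat \<lfloor>s\<rfloor>"
  have n: "real ?n \<le> s" "s < real ?n + 1" and "p < ?n" "?n < q"
    using s by linarith+
  have "real (c ! p) + 1 \<le> real (c ! ?n)"
    using between[OF \<open>p < ?n\<close> \<open>?n < q\<close>] pq(2) by simp
  show ?thesis
  proof (cases "?n + 1 < q")
    case True
    then have "real (c ! p) + 1 \<le> real (c ! (?n + 1))"
      using between[of "?n + 1"] \<open>p < ?n\<close> pq(2) by simp
    then show ?thesis
      using lin_interp_segment_bounds(1)[of ?n s] n True pq(1) \<open>real (c ! p) + 1 \<le> real (c ! ?n)\<close> by simp
  next
    case False
    then have "s = real ?n"
      using s n by linarith
    then show ?thesis
      using lin_interp_of_nat[of ?n] \<open>real (c ! p) + 1 \<le> real (c ! ?n)\<close> \<open>?n < q\<close> pq(1) by simp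
  qed
qed

lemma excursions_eq_if_overlap:
  assumes e: "(p, q) \<in> excursions c" and e': "(p', q') \<in> excursions c"
    and eq: "c ! p = c ! p'" and overlap: "p' < q" "p < q'"
  shows "(p, q) = (p', q')"
proof -
  have h: "p < q" "c ! p = c ! q" "\<And>i. p < i \<Longrightarrow> i < q \<Longrightarrow> c ! q < c ! i"
    using e by (auto simp: excursions_def)
  have h': "p' < q'" "c ! p' = c ! q'" "\<And>i. p' < i \<Longrightarrow> i < q' \<Longrightarrow> c ! q' < c ! i"
    using e' by (auto simp: excursions_def)
  have "p = p'"
    using h(3)[of p'] h'(3)[of p] h(2) h'(2) eq overlap by (cases p p' rule: linorder_cases) auto
  moreover have "q = q'"
    using h(3)[of q'] h'(3)[of q] h(1,2) h'(1,2) eq \<open>p = p'\<close> by (cases q q' rule: linorder_cases) auto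
  ultimately show ?thesis
    by simp
qed

text \<open>Distinct excursions whose interiors contain \<open>[s1, s2]\<close> start at distinct heights below
  the minimum of the contour on \<open>[s1, s2]\<close>.\<close>
lemma card_excursions_inside_le_minf:
  assumes "s1 \<le> s2"
  shows "real (card {e\<in>excursions c. real (fst e) + 1 \<le> s1 \<and> s2 \<le> real (snd e) - 1})
    \<le> minf (lin_interp c) s1 s2"
    (is "real (card ?S) \<le> ?m")
proof -
  have above: "real (c ! fst e) + 1 \<le> ?m" if "e \<in> ?S" for e
    using that assms lin_interp_above_excursion[of "fst e" "snd e"] by (intro minf_ge) auto
  have "inj_on (\<lambda>e. c ! fst e) ?S"
  proof (rule inj_onI)
    fix e e' assume "e \<in> ?S" "e' \<in> ?S" "c ! fst e = c ! fst e'"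
    then show "e = e'"
      using excursions_eq_if_overlap[of "fst e" "snd e" "fst e'" "snd e'"] assms by auto
  qed
  moreover have "(\<lambda>e. c ! fst e) ` ?S \<subseteq> {..< nat \<lfloor>?m\<rfloor>}"
  proof
    fix x assume "x \<in> (\<lambda>e. c ! fst e) ` ?S"
    then obtain e where e: "e \<in> ?S" and x: "x = c ! fst e"
      by blast
    have "int (c ! fst e) + 1 \<le> \<lfloor>?m\<rfloor>"
      using above[OF e] by (simp add: le_floor_iff)
    then show "x \<in> {..< nat \<lfloor>?m\<rfloor>}"
      using x by (simp add: zless_nat_eq_int_zless)
  qed
  ultimately have "card ?S \<le> nat \<lfloor>?m\<rfloor>"
    using card_inj_on_le[of _ ?S "{..< nat \<lfloor>?m\<rfloor>}"] by simp
  moreover have "?m \<ge> 0"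
    by (rule minf_nonneg) (rule lin_interp_nonneg)
  ultimately show ?thesis
    by linarith
qed

lemma lin_interp_le_max_nth:
  assumes "j < length c" "real i \<le> s" "s \<le> real j" "j \<le> i + 1"
  shows "lin_interp c s \<le> max (real (c ! i)) (real (c ! j))"
proof (cases "j = i + 1")
  case True
  then show ?thesis
    using lin_interp_segment_bounds(2)[of i s] assms by simp
next
  case False
  then have "s = real j" "i = j"
    using assms by linarith+
  then show ?thesis
    using lin_interp_of_nat[of j] assms(1) by simp
qed

lemma excursion_if_above_between:
  assumes "p + 1 < q" "q < length c" "c ! p \<le> H" "c ! q \<le> H"
    and between: "\<And>i. p < i \<Longrightarrow> i < q \<Longrightarrow> H < c ! i"
  shows "(p, q) \<in> excursions c" and "c ! p = H"
proof -
  have "H < c ! (p + 1)" "H < c ! (q - 1)"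
    using between assms(1) by auto
  then have "c ! p = H" "c ! q = H"
    using step[of p] step[of "q - 1"] assms(1-4) by (auto simp: Suc_diff_Suc)
  then show "(p, q) \<in> excursions c" and "c ! p = H"
    using assms(1,2) between by (auto simp: excursions_def)
qed

text \<open>Below the minimum of the contour on \<open>[s1, s2]\<close>, every integer level \<open>H\<close> is the height
  of an excursion covering \<open>[s1, s2]\<close>: the walk last visits \<open>{\<le> H}\<close> before \<open>s1\<close> at \<open>p\<close> and
  first returns to it after \<open>s2\<close> at \<open>q\<close>.\<close>
lemma excursion_covering_at_level:
  assumes s: "s1 \<le> s2" and H: "real H < minf (lin_interp c) s1 s2"
  shows "\<exists>e\<in>excursions c. real (fst e) \<le> s1 \<and> s2 \<le> real (snd e) \<and> c ! fst e = H"
proof -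
  have above: "real H < lin_interp c s" if "s1 \<le> s" "s \<le> s2" for s
    using minf_le[of s s1 s2 "lin_interp c"] lin_interp_nonneg H s that by force
  then have "0 < s1" "s2 < real (length c - 1)"
    using lin_interp_outside[of s1] lin_interp_outside[of s2] s by force+
  define P where "P = {i. real i \<le> s1 \<and> c ! i \<le> H}"
  define Q where "Q = {i. s2 \<le> real i \<and> i < length c \<and> c ! i \<le> H}"
  have "finite P"
    by (rule finite_subset[of _ "{..<length c}"]) (use s \<open>s2 < _\<close> in \<open>auto simp: P_def\<close>)
  moreover have "0 \<in> P"
    using \<open>0 < s1\<close> nth_0 by (simp add: P_def)
  ultimately obtain p where p: "p \<in> P" and p_max: "\<And>i. i \<in> P \<Longrightarrow> i \<le> p"
    using Max_in Max_ge by blast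
  have "finite Q"
    by (rule finite_subset[of _ "{..<length c}"]) (auto simp: Q_def)
  moreover have "length c - 1 \<in> Q"
    using \<open>s2 < _\<close> last not_Nil by (simp add: Q_def last_conv_nth)
  ultimately obtain q where q: "q \<in> Q" and q_min: "\<And>i. i \<in> Q \<Longrightarrow> q \<le> i"
    using Min_in Min_le by blast
  have hp: "real p \<le> s1" "c ! p \<le> H" and hq: "s2 \<le> real q" "q < length c" "c ! q \<le> H"
    using p q by (auto simp: P_def Q_def)
  have between: "H < c ! i" if "p < i" "i < q" for i
  proof (rule ccontr)
    assume "\<not> H < c ! i"
    moreover have "i \<notin> P" "i \<notin> Q"
      using p_max q_min that by force+
    ultimately have "s1 < real i" "real i < s2"
      using that hq by (auto simp: P_def Q_def)
    then show False
      using above[of "real i"] lin_interp_of_nat[of i] \<open>\<not> H < c ! i\<close> that hq by simp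
  qed
  have "p + 1 < q"
  proof (rule ccontr)
    assume "\<not> p + 1 < q"
    then have "lin_interp c s1 \<le> max (real (c ! p)) (real (c ! q))"
      using lin_interp_le_max_nth[of q p s1] hp hq s by simp
    then show False
      using above[of s1] hp hq s by simp
  qed
  then show ?thesis
    using excursion_if_above_between[OF _ hq(2) hp(2) hq(3) between] hp hq by force
qed

lemma minf_le_card_excursions_covering:
  assumes "s1 \<le> s2"
  shows "minf (lin_interp c) s1 s2 \<le> real (card {e\<in>excursions c. real (fst e) \<le> s1 \<and> s2 \<le> real (snd e)})"
    (is "?m \<le> real (card ?S)")
proof -
  have "{..<nat \<lceil>?m\<rceil>} \<subseteq> (\<lambda>e. c ! fst e) ` ?S"
  proof
    fix H assume "H \<in> {..<nat \<lceil>?m\<rceil>}"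
    then have "int H < \<lceil>?m\<rceil>"
      by (simp add: zless_nat_eq_int_zless)
    then have "real H < ?m"
      by (simp add: less_ceiling_iff)
    then show "H \<in> (\<lambda>e. c ! fst e) ` ?S"
      using excursion_covering_at_level[OF assms] by force
  qed
  moreover have "finite ?S"
    using finite_excursions by simp
  ultimately have "nat \<lceil>?m\<rceil> \<le> card ?S"
    using card_mono[of "(\<lambda>e. c ! fst e) ` ?S" "{..<nat \<lceil>?m\<rceil>}"] card_image_le[of ?S "\<lambda>e. c ! fst e"]
    by simp
  then show ?thesis
    by linarith
qed

end

section \<open>Integration over cubes\<close>

definition cube :: "nat set \<Rightarrow> real \<Rightarrow> real \<Rightarrow> (nat \<Rightarrow> real) set" where
  "cube K \<alpha> \<beta> = PiE K (\<lambda>_. {\<alpha>..\<beta>})"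

definition cube_measure :: "nat set \<Rightarrow> real \<Rightarrow> (nat \<Rightarrow> real) measure" where
  "cube_measure K n = PiM K (\<lambda>_. restrict_space lborel {0..n})"

lemma space_cube_measure: "space (cube_measure K n) = cube K 0 n"
  by (simp add: cube_measure_def cube_def space_PiM space_restrict_space)

lemma mem_cube_iff_Min_Max:
  assumes "finite K" "K \<noteq> {}" "x \<in> extensional K"
  shows "x \<in> cube K \<alpha> \<beta> \<longleftrightarrow> \<alpha> \<le> Min (x ` K) \<and> Max (x ` K) \<le> \<beta>"
  using assms by (auto simp: cube_def PiE_iff)

lemma integral_indicator_cube:
  assumes K: "finite K" and ab: "0 \<le> \<alpha>" "\<alpha> \<le> \<beta>" "\<beta> \<le> n"
  shows "integrable (cube_measure K n) (indicator (cube K \<alpha> \<beta>) :: _ \<Rightarrow> real)"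
    and "integral\<^sup>L (cube_measure K n) (indicator (cube K \<alpha> \<beta>) :: _ \<Rightarrow> real) = (\<beta> - \<alpha>) ^ card K"
proof -
  let ?M = "cube_measure K n"
  interpret product_sigma_finite "\<lambda>_. restrict_space lborel {0..n}"
    by (intro product_sigma_finite.intro sigma_finite_measure_restrict_space lborel.sigma_finite_measure_axioms) simp
  have interval: "{\<alpha>..\<beta>} \<in> sets (restrict_space lborel {0..n})"
    using ab by (subst sets_restrict_space_iff) auto
  have sets: "cube K \<alpha> \<beta> \<in> sets ?M"
    unfolding cube_measure_def cube_def by (rule sets_PiM_I_finite[OF K interval])
  have "emeasure (restrict_space lborel {0..n}) {\<alpha>..\<beta>} = ennreal (\<beta> - \<alpha>)"
    using ab by (subst emeasure_restrict_space) auto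
  then have emeasure: "emeasure ?M (cube K \<alpha> \<beta>) = ennreal ((\<beta> - \<alpha>) ^ card K)"
    unfolding cube_measure_def cube_def using ab interval
    by (subst emeasure_PiM[OF K]) (simp_all add: ennreal_power)
  show "integrable ?M (indicator (cube K \<alpha> \<beta>) :: _ \<Rightarrow> real)"
    using integrable_real_indicator[OF sets] emeasure by simp
  show "integral\<^sup>L ?M (indicator (cube K \<alpha> \<beta>) :: _ \<Rightarrow> real) = (\<beta> - \<alpha>) ^ card K"
    using ab sets emeasure by (simp add: measure_def)
qed

lemma integral_sum_indicator_cubes:
  assumes "finite K" "finite E" and ab: "\<forall>e\<in>E. 0 \<le> \<alpha> e \<and> \<alpha> e \<le> \<beta> e \<and> \<beta> e \<le> n"
  shows "integrable (cube_measure K n) (\<lambda>x. \<Sum>e\<in>E. indicator (cube K (\<alpha> e) (\<beta> e)) x :: real)"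
    and "integral\<^sup>L (cube_measure K n) (\<lambda>x. \<Sum>e\<in>E. indicator (cube K (\<alpha> e) (\<beta> e)) x :: real)
      = (\<Sum>e\<in>E. (\<beta> e - \<alpha> e) ^ card K)"
  using integral_indicator_cube[OF assms(1)] ab by (simp_all add: integral_sum)

lemma sum_indicator_eq_card_Collect:
  "finite E \<Longrightarrow> (\<Sum>e\<in>E. indicator (A e) x :: real) = real (card {e\<in>E. x \<in> A e})"
  using sum_indicator_eq_card[of E "{e. x \<in> A e}"] by (simp add: indicator_def Int_def)

lemma borel_measurable_minf_Min_Max:
  assumes "finite K" and "\<And>x. h x \<ge> 0" and "\<And>x y. \<bar>h x - h y\<bar> \<le> \<bar>x - y\<bar>"
  shows "(\<lambda>x. minf h (2 * Min (x ` K)) (2 * Max (x ` K))) \<in> borel_measurable (cube_measure K n)"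
proof -
  have id: "(\<lambda>x::real. x) \<in> borel_measurable (restrict_space lborel {0..n})"
    by (rule measurable_restrict_space1) simp
  have "(\<lambda>x. x i) \<in> borel_measurable (cube_measure K n)" if "i \<in> K" for i
    unfolding cube_measure_def using measurable_compose[OF measurable_component_singleton[OF that] id] by simp
  then show ?thesis
    using assms borel_measurable_Min[OF assms(1)] borel_measurable_Max[OF assms(1)]
    by (intro borel_measurable_minf borel_measurable_times borel_measurable_const) auto
qed

lemma integral_sandwich:
  assumes "integrable M l" "integrable M u" "f \<in> borel_measurable M"
    and "\<And>x. x \<in> space M \<Longrightarrow> l x \<le> f x \<and> f x \<le> u x \<and> 0 \<le> (f x :: real)"
  shows "integral\<^sup>L M l \<le> integral\<^sup>L M f" and "integral\<^sup>L M f \<le> integral\<^sup>L M u"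
proof -
  have "integrable M f"
    by (rule Bochner_Integration.integrable_bound[OF assms(2,3)]) (use assms(4) in \<open>fastforce intro!: AE_I2\<close>)
  then show "integral\<^sup>L M l \<le> integral\<^sup>L M f" and "integral\<^sup>L M f \<le> integral\<^sup>L M u"
    using assms by (auto intro: Bochner_Integration.integral_mono)
qed

context dyck_path
begin

lemma minf_Min_Max_bounds:
  assumes K: "finite K" "K \<noteq> {}" and x: "x \<in> extensional K"
  defines "f \<equiv> minf (lin_interp c) (2 * Min (x ` K)) (2 * Max (x ` K))"
  shows "(\<Sum>e\<in>excursions c. indicator (cube K (real (fst e) / 2 + 1 / 2) (real (snd e) / 2 - 1 / 2)) x) \<le> f"
    and "f \<le> (\<Sum>e\<in>excursions c. indicator (cube K (real (fst e) / 2) (real (snd e) / 2)) x)"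
proof -
  obtain j where "j \<in> K"
    using K(2) by blast
  then have "Min (x ` K) \<le> x j" "x j \<le> Max (x ` K)"
    using K(1) by simp_all
  then have le: "2 * Min (x ` K) \<le> 2 * Max (x ` K)"
    by simp
  show "(\<Sum>e\<in>excursions c. indicator (cube K (real (fst e) / 2 + 1 / 2) (real (snd e) / 2 - 1 / 2)) x) \<le> f"
    using card_excursions_inside_le_minf[OF le] unfolding f_def
    by (simp add: sum_indicator_eq_card_Collect finite_excursions mem_cube_iff_Min_Max[OF K x] field_simps)
  show "f \<le> (\<Sum>e\<in>excursions c. indicator (cube K (real (fst e) / 2) (real (snd e) / 2)) x)"
    using minf_le_card_excursions_covering[OF le] unfolding f_def
    by (simp add: sum_indicator_eq_card_Collect finite_excursions mem_cube_iff_Min_Max[OF K x] field_simps)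
qed

lemma integral_excursion_cubes:
  assumes K: "finite K" and n: "real (length c) \<le> 2 * n + 1" and \<delta>: "0 \<le> \<delta>" "\<delta> \<le> 1 / 2"
  defines "g \<equiv> \<lambda>x. \<Sum>e\<in>excursions c. indicator (cube K (real (fst e) / 2 + \<delta>) (real (snd e) / 2 - \<delta>)) x"
  shows "integrable (cube_measure K n) g"
    and "integral\<^sup>L (cube_measure K n) g = (\<Sum>(p, q)\<in>excursions c. (real ((q - p) div 2) - 2 * \<delta>) ^ card K)"
proof -
  have half: "real q - real p = 2 * real ((q - p) div 2)" "1 \<le> (q - p) div 2"
    and "real q + 1 \<le> 2 * n + 1" if "(p, q) \<in> excursions c" for p q
    using excursion_half_length[OF that] that n by (auto simp: excursions_def)
  then have "\<forall>e\<in>excursions c. 0 \<le> real (fst e) / 2 + \<delta> \<and> real (fst e) / 2 + \<delta> \<le> real (snd e) / 2 - \<delta>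
      \<and> real (snd e) / 2 - \<delta> \<le> n"
    using \<delta> by (force simp: field_simps)
  note cubes = integral_sum_indicator_cubes[OF K finite_excursions[of c] this, folded g_def]
  show "integrable (cube_measure K n) g"
    by (rule cubes(1))
  show "integral\<^sup>L (cube_measure K n) g = (\<Sum>(p, q)\<in>excursions c. (real ((q - p) div 2) - 2 * \<delta>) ^ card K)"
    unfolding cubes(2)
  proof (rule sum.cong[OF refl])
    fix e assume "e \<in> excursions c"
    then have "real (snd e) / 2 - \<delta> - (real (fst e) / 2 + \<delta>) = real ((snd e - fst e) div 2) - 2 * \<delta>"
      using half(1)[of "fst e" "snd e"] by (simp add: field_simps)
    then show "(real (snd e) / 2 - \<delta> - (real (fst e) / 2 + \<delta>)) ^ card K
        = (case e of (p, q) \<Rightarrow> (real ((q - p) div 2) - 2 * \<delta>) ^ card K)"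
      by (simp add: case_prod_beta)
  qed
qed

lemma integral_minf_Min_Max_bounds:
  assumes K: "finite K" "K \<noteq> {}" and n: "real (length c) \<le> 2 * n + 1"
  defines "f \<equiv> \<lambda>x. minf (lin_interp c) (2 * Min (x ` K)) (2 * Max (x ` K))"
  shows "real (\<Sum>(p, q)\<in>excursions c. ((q - p) div 2 - 1) ^ card K) \<le> integral\<^sup>L (cube_measure K n) f"
    and "integral\<^sup>L (cube_measure K n) f \<le> real (\<Sum>(p, q)\<in>excursions c. ((q - p) div 2) ^ card K)"
proof -
  note lower = integral_excursion_cubes[OF K(1) n, of "1 / 2", simplified]
  note upper = integral_excursion_cubes[OF K(1) n, of 0, simplified]
  have "f \<in> borel_measurable (cube_measure K n)"
    unfolding f_def by (rule borel_measurable_minf_Min_Max[OF K(1) lin_interp_nonneg lin_interp_lipschitz])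
  moreover have "x \<in> extensional K" if "x \<in> space (cube_measure K n)" for x
    using that by (auto simp: space_cube_measure cube_def PiE_def)
  ultimately have "integral\<^sup>L (cube_measure K n) (\<lambda>x. \<Sum>e\<in>excursions c.
        indicator (cube K (real (fst e) / 2 + 1 / 2) (real (snd e) / 2 - 1 / 2)) x) \<le> integral\<^sup>L (cube_measure K n) f"
    and "integral\<^sup>L (cube_measure K n) f \<le> integral\<^sup>L (cube_measure K n) (\<lambda>x. \<Sum>e\<in>excursions c.
        indicator (cube K (real (fst e) / 2) (real (snd e) / 2)) x)"
    using minf_Min_Max_bounds[OF K] minf_nonneg[OF lin_interp_nonneg]
    by (auto simp: f_def intro!: integral_sandwich[OF lower(1) upper(1)])
  moreover have "real (\<Sum>(p, q)\<in>excursions c. ((q - p) div 2 - 1) ^ card K)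
      = (\<Sum>(p, q)\<in>excursions c. (real ((q - p) div 2) - 1) ^ card K)"
    unfolding of_nat_sum using excursion_half_length(2) by (intro sum.cong) (auto simp: of_nat_diff)
  ultimately show "real (\<Sum>(p, q)\<in>excursions c. ((q - p) div 2 - 1) ^ card K) \<le> integral\<^sup>L (cube_measure K n) f"
    and "integral\<^sup>L (cube_measure K n) f \<le> real (\<Sum>(p, q)\<in>excursions c. ((q - p) div 2) ^ card K)"
    unfolding lower(2) upper(2) by (simp_all add: of_nat_sum case_prod_beta)
qed
end

theorem lemma7p1:
  fixes t :: otree and k :: nat
  assumes "k \<ge> 1"
  shows "0 \<le> real (Dk t k) - DDk t k \<and> real (Dk t k) - DDk t k \<le> real (tsize t) ^ k"
proof -
  let ?c = "contour_seq t" and ?K = "{..<k}"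
  let ?lower = "\<Sum>(p, q)\<in>excursions ?c. ((q - p) div 2 - 1) ^ k"
  interpret dyck_path ?c
    by (rule dyck_path_contour_seq)
  have K: "finite ?K" "?K \<noteq> {}" "card ?K = k"
    using assms by (auto simp: lessThan_empty_iff)
  have "real (length ?c) \<le> 2 * real (tsize t) + 1"
    using length_contour_seq[of t] by linarith
  note bounds = integral_minf_Min_Max_bounds[OF K(1,2) this, unfolded K(3)]
  have "DDk t k = integral\<^sup>L (cube_measure ?K (tsize t))
      (\<lambda>x. minf (lin_interp ?c) (2 * Min (x ` ?K)) (2 * Max (x ` ?K)))"
    by (simp add: DDk_def cube_measure_def contour_eq_lin_interp)
  then have "real ?lower \<le> DDk t k" and "DDk t k \<le> real (Dk t k)"
    using bounds Dk_eq_sum_excursions[OF assms, of t] by simp_all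
  moreover have "real (Dk t k) \<le> real ?lower + real ((tsize t - 1) ^ k)"
    unfolding of_nat_add[symmetric] of_nat_le_iff
    using sum_excursions_power_le[OF assms, of t] Dk_eq_sum_excursions[OF assms, of t] by simp
  moreover have "real ((tsize t - 1) ^ k) \<le> real (tsize t) ^ k"
    by (simp add: power_mono)
  ultimately show ?thesis
    by linarith
qed

end
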